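(* Let $0<q<1$, let $n,i$ be integers with $1\le i\le n$, and let $x\in[0,1]$. Then $$\frac{1}{([1-x]_q+[x]_q)^{n-i}}\sum_{k=i-1}^n\frac{\binom{k}{i}}{\binom{n}{i}}B_{k,n}(x,q)=\sum_{k=0}^i q^{\binom{k}{2}}\binom{x}{k}_q[k]_q!\,S(i,k:q).$$
   Context: Let $q$ be a real number with $0<q<1$. For real $x$, the $q$-number is $[x]_q=\frac{1-q^x}{1-q}$. For a nonnegative integer $k$ and $x\in[0,1]$, the modified $q$-Bernstein polynomials $B_{k,n}(x,q)$, $n=0,1,2,\dots$, are defined by the generating function $$\frac{t^k e^{[1-x]_q t}[x]_q^k}{k!}=\sum_{n=0}^\infty B_{k,n}(x,q)\frac{t^n}{n!}.$$ Here $\binom{k}{i}=0$ when $k<i$. Let $[0]_q!=1$ and $[k]_q!=[k]_q[k-1]_q\cdots[1]_q$. The Gaussian binomial coefficient is $\binom{k}{j}_q=\frac{[k]_q!}{[j]_q![k-j]_q!}$ for $0\le j\le k$. For real $x$, $\binom{x}{k}_q=\frac{[x]_q[x-1]_q\cdots[x-k+1]_q}{[k]_q!}$, with $\binom{x}{0}_q=1$. The $q$-Stirling numbers of the second kind are $$S(n,k:q)=\frac{q^{-\binom{k}{2}}}{[k]_q!}\sum_{j=0}^k(-1)^j q^{\binom{j}{2}}\binom{k}{j}_q[k-j]_q^{\,n},$$ with the convention $0^0=1$. *)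

theory Defs
  imports Complex_Main "HOL-Computational_Algebra.Formal_Power_Series"
begin

definition qnum :: "real \<Rightarrow> real \<Rightarrow> real" where
  "qnum q x = (1 - q powr x) / (1 - q)"

definition qfact :: "real \<Rightarrow> nat \<Rightarrow> real" where
  "qfact q k = (\<Prod>j=1..k. qnum q (real j))"

definition gauss_binom :: "real \<Rightarrow> nat \<Rightarrow> nat \<Rightarrow> real" where
  "gauss_binom q k j = qfact q k / (qfact q j * qfact q (k - j))"

definition qbinom_real :: "real \<Rightarrow> real \<Rightarrow> nat \<Rightarrow> real" where
  "qbinom_real q x k = (\<Prod>j<k. qnum q (x - real j)) / qfact q k"

text \<open>q-Stirling numbers of the second kind (0^0 = 1 holds for nat powers).\<close>
definition qstirling2 :: "real \<Rightarrow> nat \<Rightarrow> nat \<Rightarrow> real" where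
  "qstirling2 q n k = inverse (q ^ (k choose 2)) / qfact q k *
     (\<Sum>j=0..k. (-1) ^ j * q ^ (j choose 2) * gauss_binom q k j * (qnum q (real (k - j))) ^ n)"

text \<open>Modified q-Bernstein polynomials via their generating function:
  t^k e^{[1-x]_q t} [x]_q^k / k! = \<Sum>n B_{k,n}(x,q) t^n / n!.\<close>
definition qbern_gf :: "real \<Rightarrow> nat \<Rightarrow> real \<Rightarrow> real fps" where
  "qbern_gf q k x = fps_X ^ k * fps_exp (qnum q (1 - x)) * fps_const ((qnum q x) ^ k / fact k)"

definition qbern :: "real \<Rightarrow> nat \<Rightarrow> nat \<Rightarrow> real \<Rightarrow> real" where
  "qbern q k n x = fact n * fps_nth (qbern_gf q k x) n"

end

theory Submission
  imports Defs
begin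

text \<open>
  The generating function gives the closed form B(k,n) = C(n,k) [x]^k [1-x]^(n-k), so by
  C(n,k) C(k,i) = C(n,i) C(n-i,k-i) and the binomial theorem the left-hand side is [x]^i.
  The right-hand side is [x]^i too: it is the q-analogue of x^n = sum_k S(n,k) x(x-1)...(x-k+1),
  with the falling factorial replaced by q^C(k,2) [x][x-1]...[x-k+1]. That identity follows by
  induction on n from [x] = [k] + q^k [x-k] and the triangular recurrence
  S(n+1,k+1) = [k+1] S(n,k+1) + S(n,k), which in turn comes from the q-Pascal rule and the
  vanishing of sum_j (-1)^j q^C(j,2) C(m,j)_q for m > 0.
\<close>

lemma qbern_eq:
  "qbern q k n x =
     (if k \<le> n then real (n choose k) * qnum q x ^ k * qnum q (1 - x) ^ (n - k) else 0)"
proof -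
  have "qbern q k n x = fact n * (if n < k then 0 else qnum q (1 - x) ^ (n - k) / fact (n - k))
                          * (qnum q x ^ k / fact k)"
    unfolding qbern_def qbern_gf_def by (simp add: fps_X_power_mult_nth)
  then show ?thesis
    by (auto simp: binomial_fact field_simps)
qed

lemma sum_choose_ratio_binomial:
  fixes a b :: "'a :: field_char_0"
  assumes "1 \<le> i" "i \<le> n"
  shows "(\<Sum>k = i - 1..n. of_nat (k choose i) / of_nat (n choose i) *
            (if k \<le> n then of_nat (n choose k) * b ^ k * a ^ (n - k) else 0))
         = b ^ i * (a + b) ^ (n - i)"
proof -
  have ni: "of_nat (n choose i) \<noteq> (0 :: 'a)"
    using assms by simp
  have "{i - 1..n} = insert (i - 1) {i..n}"
    using assms by auto
  then have "(\<Sum>k = i - 1..n. of_nat (k choose i) / of_nat (n choose i) *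
               (if k \<le> n then of_nat (n choose k) * b ^ k * a ^ (n - k) else 0))
           = (\<Sum>k = i..n. of_nat (k choose i) / of_nat (n choose i) *
               (of_nat (n choose k) * b ^ k * a ^ (n - k)))"
    using assms by (simp add: sum.insert)
  also have "\<dots> = (\<Sum>k = i..n. of_nat ((n - i) choose (k - i)) * b ^ k * a ^ (n - k))"
  proof (rule sum.cong)
    fix k assume k: "k \<in> {i..n}"
    have "of_nat (n choose k) * of_nat (k choose i) =
          (of_nat (n choose i) * of_nat ((n - i) choose (k - i)) :: 'a)"
      using choose_mult[of i k n] k by (metis atLeastAtMost_iff of_nat_mult)
    with ni show "of_nat (k choose i) / of_nat (n choose i) *
                    (of_nat (n choose k) * b ^ k * a ^ (n - k))
                  = of_nat ((n - i) choose (k - i)) * b ^ k * a ^ (n - k)"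
      by (simp add: field_simps)
  qed simp
  also have "\<dots> = (\<Sum>l = 0..n - i. of_nat ((n - i) choose l) * b ^ (i + l) * a ^ (n - i - l))"
    by (rule sum.reindex_bij_witness[of _ "\<lambda>l. l + i" "\<lambda>k. k - i"]) (use assms in auto)
  also have "\<dots> = b ^ i * (\<Sum>l = 0..n - i. of_nat ((n - i) choose l) * b ^ l * a ^ (n - i - l))"
    by (simp add: sum_distrib_left power_add algebra_simps)
  also have "\<dots> = b ^ i * (b + a) ^ (n - i)"
    by (simp add: binomial_ring atLeast0AtMost)
  finally show ?thesis
    by (simp add: add.commute)
qed

lemma qnum_add: "qnum q (a + b) = qnum q a + q powr a * qnum q b"
  by (simp add: qnum_def powr_add diff_divide_distrib[symmetric] add_divide_distrib[symmetric]
      right_diff_distrib)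

lemma qnum_complement_add_pos:
  assumes "0 < q" "q < 1" "0 \<le> x" "x \<le> 1"
  shows "qnum q (1 - x) + qnum q x > 0"
proof -
  have "q powr x \<le> 1" "q powr (1 - x) \<le> 1"
    using assms by (auto intro: powr_le1)
  moreover have "q powr x < 1 \<or> q powr (1 - x) < 1"
    using assms powr01_less_one[of q x] by (cases "x = 0") auto
  ultimately have "q powr x + q powr (1 - x) < 2"
    by linarith
  moreover have "qnum q (1 - x) + qnum q x = (2 - q powr (1 - x) - q powr x) / (1 - q)"
    unfolding qnum_def by (simp add: add_divide_distrib[symmetric])
  ultimately show ?thesis
    using assms by simp
qed

definition qstirling2_sum :: "real \<Rightarrow> nat \<Rightarrow> nat \<Rightarrow> real" where
  "qstirling2_sum q n k =
     (\<Sum>j = 0..k. (-1) ^ j * q ^ (j choose 2) * gauss_binom q k j * qnum q (real (k - j)) ^ n)"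

definition qfalling :: "real \<Rightarrow> real \<Rightarrow> nat \<Rightarrow> real" where
  "qfalling q x k = q ^ (k choose 2) * (\<Prod>j<k. qnum q (x - real j))"

lemma choose_two_Suc: "Suc j choose 2 = (j choose 2) + j"
  by (simp add: numeral_2_eq_2)

context
  fixes q :: real
  assumes q_pos: "0 < q" and q_less_1: "q < 1"
begin

lemma qnum_of_nat: "qnum q (real m) = (1 - q ^ m) / (1 - q)"
  by (simp add: qnum_def powr_realpow q_pos)

lemma qnum_0: "qnum q 0 = 0"
  using q_pos by (simp add: qnum_def)

lemma qnum_of_nat_add: "qnum q (real (a + b)) = qnum q (real a) + q ^ a * qnum q (real b)"
  using qnum_add[of q "real a" "real b"] q_pos by (simp add: powr_realpow)

lemma qnum_of_nat_pos: "0 < m \<Longrightarrow> qnum q (real m) > 0"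
  using q_pos q_less_1 by (simp add: qnum_of_nat power_less_one_iff)

lemma qfact_0: "qfact q 0 = 1"
  by (simp add: qfact_def)

lemma qfact_Suc: "qfact q (Suc k) = qnum q (real (Suc k)) * qfact q k"
  unfolding qfact_def by (simp add: prod.nat_ivl_Suc')

lemma qfact_pos: "qfact q k > 0"
  unfolding qfact_def by (rule prod_pos) (auto intro: qnum_of_nat_pos)

lemma gauss_binom_0_right: "gauss_binom q k 0 = 1"
  using qfact_pos[of k] by (simp add: gauss_binom_def qfact_0)

lemma gauss_binom_diag: "gauss_binom q k k = 1"
  using qfact_pos[of k] by (simp add: gauss_binom_def qfact_0)

lemma gauss_binom_Suc_Suc_absorb:
  assumes "j \<le> m"
  shows "gauss_binom q (Suc m) (Suc j) * qnum q (real (Suc j)) =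
         qnum q (real (Suc m)) * gauss_binom q m j"
  using assms qnum_of_nat_pos[of "Suc j"] qfact_pos[of j] qfact_pos[of "m - j"]
  by (simp add: gauss_binom_def qfact_Suc field_simps)

lemma gauss_binom_pascal:
  assumes "j < m"
  shows "gauss_binom q (Suc m) (Suc j) = gauss_binom q m j + q ^ Suc j * gauss_binom q m (Suc j)"
proof -
  define r where "r = m - Suc j"
  have m: "m = Suc j + r" "Suc m - Suc j = Suc r" "m - j = Suc r"
    using assms by (auto simp: r_def)
  have split: "qnum q (real (Suc m)) = qnum q (real (Suc j)) + q ^ Suc j * qnum q (real (Suc r))"
    using qnum_of_nat_add[of "Suc j" "Suc r"] m(1) by simp
  show ?thesis
    using qnum_of_nat_pos[of "Suc j"] qnum_of_nat_pos[of "Suc r"] qfact_pos[of j] qfact_pos[of r]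
    unfolding gauss_binom_def m(2,3) r_def[symmetric] qfact_Suc split
    by (simp add: field_simps)
qed

lemma qstirling2_eq: "qstirling2 q n k = qstirling2_sum q n k / (q ^ (k choose 2) * qfact q k)"
  unfolding qstirling2_def qstirling2_sum_def by (simp add: field_simps)

text \<open>In the term of index j+1 split [m+1] = [m-j] + q^(m-j) [j+1] and absorb [j+1] into
  the Gaussian binomial.\<close>
lemma qstirling2_sum_Suc_Suc:
  "qstirling2_sum q (Suc n) (Suc m) =
     qnum q (real (Suc m)) * qstirling2_sum q n (Suc m) + q ^ m * qnum q (real (Suc m)) * qstirling2_sum q n m"
proof -
  define Q where "Q = qnum q (real (Suc m))"
  define f where "f j = (-1) ^ j * q ^ (j choose 2) * gauss_binom q (Suc m) j
      * qnum q (real (Suc m - j)) ^ n * (qnum q (real (Suc m - j)) - Q)" for j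
  have "qstirling2_sum q (Suc n) (Suc m) - Q * qstirling2_sum q n (Suc m) = (\<Sum>j = 0..Suc m. f j)"
    unfolding qstirling2_sum_def f_def by (simp add: sum_subtractf sum_distrib_left algebra_simps)
  also have "\<dots> = f 0 + (\<Sum>j = 0..m. f (Suc j))"
    by (simp only: sum.atLeast0_atMost_Suc_shift o_def)
  also have "f 0 = 0"
    unfolding f_def Q_def by simp
  also have "(\<Sum>j = 0..m. f (Suc j)) = (\<Sum>j = 0..m. q ^ m * Q *
               ((-1) ^ j * q ^ (j choose 2) * gauss_binom q m j * qnum q (real (m - j)) ^ n))"
  proof (rule sum.cong)
    fix j assume "j \<in> {0..m}"
    then have jm: "j \<le> m" by simp
    have "Q = qnum q (real (m - j)) + q ^ (m - j) * qnum q (real (Suc j))"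
      unfolding Q_def using qnum_of_nat_add[of "m - j" "Suc j"] jm by (simp add: Suc_diff_le)
    then have "f (Suc j) = (-1) ^ j * (q ^ (j choose 2) * q ^ j * q ^ (m - j))
        * (gauss_binom q (Suc m) (Suc j) * qnum q (real (Suc j))) * qnum q (real (m - j)) ^ n"
      unfolding f_def by (simp add: choose_two_Suc power_add algebra_simps)
    also have "q ^ (j choose 2) * q ^ j * q ^ (m - j) = q ^ (j choose 2) * q ^ m"
      using jm by (simp add: power_add[symmetric])
    finally show "f (Suc j) = q ^ m * Q *
               ((-1) ^ j * q ^ (j choose 2) * gauss_binom q m j * qnum q (real (m - j)) ^ n)"
      unfolding gauss_binom_Suc_Suc_absorb[OF jm] Q_def by (simp add: algebra_simps)
  qed simp
  also have "\<dots> = q ^ m * Q * qstirling2_sum q n m"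
    unfolding qstirling2_sum_def by (simp add: sum_distrib_left)
  finally show ?thesis
    unfolding Q_def by simp
qed

text \<open>By q-Pascal the sum telescopes: the part q^j C(m,j)_q of the term of index j cancels
  the part C(m,j)_q of the term of index j+1.\<close>
lemma qstirling2_sum_0_Suc: "qstirling2_sum q 0 (Suc m) = 0"
proof -
  define h where "h j = (-1) ^ j * q ^ (j choose 2)" for j :: nat
  define u where "u j = (if j = 0 then 0 else gauss_binom q m (j - 1))" for j
  define v where "v j = (if j \<le> m then q ^ j * gauss_binom q m j else 0)" for j
  have pascal: "gauss_binom q (Suc m) j = u j + v j" if "j \<le> Suc m" for j
  proof (cases j)
    case 0
    then show ?thesis by (simp add: u_def v_def gauss_binom_0_right)
  next
    case (Suc j')
    with that consider "j' < m" | "j' = m" by linarith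
    then show ?thesis
      by cases (use Suc gauss_binom_pascal in \<open>auto simp: u_def v_def gauss_binom_diag\<close>)
  qed
  have "qstirling2_sum q 0 (Suc m) = (\<Sum>j = 0..Suc m. h j * u j) + (\<Sum>j = 0..Suc m. h j * v j)"
    unfolding qstirling2_sum_def h_def sum.distrib[symmetric] distrib_left[symmetric]
    by (intro sum.cong) (auto simp: pascal)
  also have "(\<Sum>j = 0..Suc m. h j * u j) = (\<Sum>j = 0..m. h (Suc j) * gauss_binom q m j)"
    by (simp only: sum.atLeast0_atMost_Suc_shift o_def) (simp add: u_def)
  also have "\<dots> = - (\<Sum>j = 0..m. h j * (q ^ j * gauss_binom q m j))"
    unfolding h_def by (simp add: choose_two_Suc power_add sum_negf[symmetric] algebra_simps)
  also have "(\<Sum>j = 0..Suc m. h j * v j) = (\<Sum>j = 0..m. h j * (q ^ j * gauss_binom q m j))"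
    by (simp add: v_def)
  finally show ?thesis
    by simp
qed

lemma qstirling2_sum_eq_0: "n < k \<Longrightarrow> qstirling2_sum q n k = 0"
proof (induction n arbitrary: k)
  case 0
  then show ?case
    using qstirling2_sum_0_Suc by (cases k) auto
next
  case (Suc n)
  then obtain m where "k = Suc m" "n < m"
    by (cases k) auto
  then show ?case
    using Suc.IH by (simp add: qstirling2_sum_Suc_Suc)
qed

lemma qstirling2_Suc_Suc:
  "qstirling2 q (Suc n) (Suc m) = qnum q (real (Suc m)) * qstirling2 q n (Suc m) + qstirling2 q n m"
  using qnum_of_nat_pos[of "Suc m"] qfact_pos[of m] q_pos
  by (simp add: qstirling2_eq qstirling2_sum_Suc_Suc choose_two_Suc qfact_Suc power_add field_simps)

lemma qstirling2_Suc_0: "qstirling2 q (Suc n) 0 = 0"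
  by (simp add: qstirling2_eq qstirling2_sum_def qnum_0)

lemma qstirling2_0_0: "qstirling2 q 0 0 = 1"
  by (simp add: qstirling2_eq qstirling2_sum_def gauss_binom_0_right qfact_0 binomial_eq_0)

lemma qnum_mult_qfalling:
  "qnum q x * qfalling q x k = qnum q (real k) * qfalling q x k + qfalling q x (Suc k)"
proof -
  have "qnum q x = qnum q (real k) + q ^ k * qnum q (x - real k)"
    using qnum_add[of q "real k" "x - real k"] q_pos by (simp add: powr_realpow)
  then show ?thesis
    unfolding qfalling_def by (simp add: choose_two_Suc power_add algebra_simps)
qed

lemma qnum_power_eq_sum_qstirling2:
  "qnum q x ^ n = (\<Sum>k = 0..n. qfalling q x k * qstirling2 q n k)"
proof (induction n)
  case 0
  then show ?case
    by (simp add: qstirling2_0_0 qfalling_def binomial_eq_0)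
next
  case (Suc n)
  define Q where "Q k = qnum q (real k)" for k :: nat
  have "qnum q x ^ Suc n = (\<Sum>k = 0..n. qnum q x * qfalling q x k * qstirling2 q n k)"
    using Suc.IH by (simp add: sum_distrib_left algebra_simps)
  also have "\<dots> = (\<Sum>k = 0..n. Q k * qfalling q x k * qstirling2 q n k)
                 + (\<Sum>k = 0..n. qfalling q x (Suc k) * qstirling2 q n k)"
    unfolding qnum_mult_qfalling Q_def by (simp add: sum.distrib[symmetric] algebra_simps)
  also have "(\<Sum>k = 0..n. Q k * qfalling q x k * qstirling2 q n k)
           = (\<Sum>k = 0..Suc n. Q k * qfalling q x k * qstirling2 q n k)"
    using qstirling2_sum_eq_0[of n "Suc n"] by (simp add: qstirling2_eq)
  also have "\<dots> = (\<Sum>k = 0..n. Q (Suc k) * qfalling q x (Suc k) * qstirling2 q n (Suc k))"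
    by (simp only: sum.atLeast0_atMost_Suc_shift o_def) (simp add: Q_def qnum_0)
  also have "\<dots> + (\<Sum>k = 0..n. qfalling q x (Suc k) * qstirling2 q n k)
           = (\<Sum>k = 0..Suc n. qfalling q x k * qstirling2 q (Suc n) k)"
    by (simp only: sum.atLeast0_atMost_Suc_shift o_def)
      (simp add: qstirling2_Suc_0 qstirling2_Suc_Suc Q_def sum.distrib[symmetric] algebra_simps)
  finally show ?case .
qed

lemma qfalling_eq_qbinom_real: "qfalling q x k = q ^ (k choose 2) * qbinom_real q x k * qfact q k"
  using qfact_pos[of k] by (simp add: qfalling_def qbinom_real_def)

end

theorem theorem8:
  fixes q x :: real and n i :: nat
  assumes "0 < q" "q < 1" "1 \<le> i" "i \<le> n" "0 \<le> x" "x \<le> 1"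
  shows "1 / (qnum q (1 - x) + qnum q x) ^ (n - i) *
           (\<Sum>k = i - 1..n. real (k choose i) / real (n choose i) * qbern q k n x)
         = (\<Sum>k = 0..i. q ^ (k choose 2) * qbinom_real q x k * qfact q k * qstirling2 q i k)"
proof -
  have "qnum q (1 - x) + qnum q x > 0"
    using qnum_complement_add_pos assms by blast
  moreover have "(\<Sum>k = i - 1..n. real (k choose i) / real (n choose i) * qbern q k n x)
      = qnum q x ^ i * (qnum q (1 - x) + qnum q x) ^ (n - i)"
    unfolding qbern_eq by (rule sum_choose_ratio_binomial[OF assms(3,4)])
  moreover have "(\<Sum>k = 0..i. q ^ (k choose 2) * qbinom_real q x k * qfact q k * qstirling2 q i k)
      = qnum q x ^ i"
    using assms(1,2) by (simp add: qnum_power_eq_sum_qstirling2 qfalling_eq_qbinom_real)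
  ultimately show ?thesis
    by simp
qed

end
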